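(* Let $K\ge1$ and let $h_1,\dots,h_K>0$. Let $\pi$ be a permutation of $\{1,\dots,K\}$ such that $h_{\pi(j_1)}\le h_{\pi(j_2)}$ for all $j_1\le j_2$. Define $$E_{\mathrm{STAC}}=\sum_{j=1}^K\Big(\frac{2^{j-1}}{h_{\pi(j)}}\Big)^2,\qquad E_{\mathrm{SEP}}=\frac1K\sum_{i=1}^K\sum_{j=1}^K\Big(\frac{2^{j-1}}{h_i}\Big)^2.$$ Then $E_{\mathrm{SEP}}\ge E_{\mathrm{STAC}}$, and equality holds only when $h_1=h_2=\dots=h_K$.
   Context: $h_i$ is the (real, positive) channel gain from node $i$ to the receiver. $E_{\mathrm{STAC}}$ is the total energy when node $\pi(j)$ transmits with weight $2^{j-1}$ (power $(2^{j-1}/h_{\pi(j)})^2$) for unit time; $E_{\mathrm{SEP}}$ is the total energy when each node transmits separately for time $1/K$ with power $\sum_{j}(2^{j-1}/h_i)^2$. *)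

theory Defs
  imports "HOL-Analysis.Analysis" "HOL-Combinatorics.Permutations"
begin

definition E_STAC :: "nat \<Rightarrow> (nat \<Rightarrow> real) \<Rightarrow> (nat \<Rightarrow> nat) \<Rightarrow> real" where
  "E_STAC K h \<pi> = (\<Sum>j=1..K. (2 ^ (j - 1) / h (\<pi> j))^2)"

definition E_SEP :: "nat \<Rightarrow> (nat \<Rightarrow> real) \<Rightarrow> real" where
  "E_SEP K h = (1 / real K) * (\<Sum>i=1..K. \<Sum>j=1..K. (2 ^ (j - 1) / h i)^2)"

end

theory Submission
  imports Defs
begin

text \<open>
  Substituting \<open>a\<^sub>j = (2\<^sup>j\<^sup>-\<^sup>1)\<^sup>2\<close> and \<open>x\<^sub>j = h\<^sub>\<pi>\<^sub>(\<^sub>j\<^sub>)\<^sup>-\<^sup>2\<close>, and reindexing the outer sum of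
  \<open>E\<^sub>S\<^sub>E\<^sub>P\<close> by \<open>\<pi>\<close>, the claim becomes Chebyshev's sum inequality
  \<open>K \<Sum> a\<^sub>j x\<^sub>j \<le> (\<Sum> a\<^sub>j)(\<Sum> x\<^sub>j)\<close> for the oppositely ordered sequences \<open>a\<close> (increasing)
  and \<open>x\<close> (decreasing). The defect equals \<open>\<Sum>\<^sub>j\<^sub>,\<^sub>k (a\<^sub>j - a\<^sub>k)(x\<^sub>j - x\<^sub>k)\<close> up to a factor 2;
  all its terms are \<open>\<le> 0\<close>, so equality forces each to vanish, and since the \<open>a\<^sub>j\<close> are
  distinct, all \<open>x\<^sub>j\<close> coincide.
\<close>

lemma chebyshev_sum_identity:
  fixes a x :: "'i \<Rightarrow> 'a::comm_ring_1"
  assumes "finite S"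
  shows "(\<Sum>j\<in>S. \<Sum>k\<in>S. (a j - a k) * (x j - x k))
        = 2 * (of_nat (card S) * (\<Sum>j\<in>S. a j * x j) - (\<Sum>j\<in>S. a j) * (\<Sum>j\<in>S. x j))"
proof -
  have "(\<Sum>j\<in>S. \<Sum>k\<in>S. (a j - a k) * (x j - x k))
     = (\<Sum>j\<in>S. \<Sum>k\<in>S. a j * x j + a k * x k - a j * x k - a k * x j)"
    by (simp add: algebra_simps)
  also have "\<dots> = of_nat (card S) * (\<Sum>j\<in>S. a j * x j) + of_nat (card S) * (\<Sum>j\<in>S. a j * x j)
      - (\<Sum>j\<in>S. a j) * (\<Sum>j\<in>S. x j) - (\<Sum>j\<in>S. a j) * (\<Sum>j\<in>S. x j)"
    by (simp add: sum.distrib sum_subtractf sum_distrib_left sum_distrib_right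
        sum.swap[of "\<lambda>j k. a k * x j"] algebra_simps)
  finally show ?thesis by (simp add: algebra_simps)
qed

lemma chebyshev_sum_le_oppositely_ordered:
  fixes a x :: "'i \<Rightarrow> 'a::linordered_idom"
  assumes "finite S"
    and opposite: "\<And>j k. j \<in> S \<Longrightarrow> k \<in> S \<Longrightarrow> (a j - a k) * (x j - x k) \<le> 0"
  shows "of_nat (card S) * (\<Sum>j\<in>S. a j * x j) \<le> (\<Sum>j\<in>S. a j) * (\<Sum>j\<in>S. x j)"
proof -
  have "(\<Sum>j\<in>S. \<Sum>k\<in>S. (a j - a k) * (x j - x k)) \<le> 0"
    by (intro sum_nonpos) (simp add: opposite)
  then show ?thesis by (simp add: chebyshev_sum_identity[OF \<open>finite S\<close>])
qed

lemma chebyshev_sum_eq_imp_constant: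
  fixes a x :: "'i \<Rightarrow> 'a::linordered_idom"
  assumes "finite S"
    and opposite: "\<And>j k. j \<in> S \<Longrightarrow> k \<in> S \<Longrightarrow> (a j - a k) * (x j - x k) \<le> 0"
    and "inj_on a S"
    and eq: "of_nat (card S) * (\<Sum>j\<in>S. a j * x j) = (\<Sum>j\<in>S. a j) * (\<Sum>j\<in>S. x j)"
    and "j \<in> S" "k \<in> S"
  shows "x j = x k"
proof -
  let ?d = "\<lambda>(j, k). - ((a j - a k) * (x j - x k))"
  have "sum ?d (S \<times> S) = - (\<Sum>j\<in>S. \<Sum>k\<in>S. (a j - a k) * (x j - x k))"
    by (simp add: sum.cartesian_product prod.case_distrib flip: sum_negf)
  also have "\<dots> = 0"
    using chebyshev_sum_identity[OF \<open>finite S\<close>, of a x] eq by simp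
  finally have "sum ?d (S \<times> S) = 0" .
  moreover have "p \<in> S \<times> S \<Longrightarrow> 0 \<le> ?d p" for p
    using opposite by (auto simp: case_prod_unfold)
  ultimately have "?d (j, k) = 0"
    using sum_nonneg_eq_0_iff[of "S \<times> S" ?d] \<open>finite S\<close> \<open>j \<in> S\<close> \<open>k \<in> S\<close> by blast
  then have "(a j - a k) * (x j - x k) = 0" by simp
  moreover have "j \<noteq> k \<Longrightarrow> a j \<noteq> a k"
    using \<open>inj_on a S\<close> \<open>j \<in> S\<close> \<open>k \<in> S\<close> by (auto dest: inj_onD)
  ultimately show ?thesis by (cases "j = k") auto
qed

lemma mono_antimono_product_nonpos:
  fixes a x :: "'i::linorder \<Rightarrow> 'a::linordered_idom"
  assumes "mono_on S a" "antimono_on S x" "j \<in> S" "k \<in> S"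
  shows "(a j - a k) * (x j - x k) \<le> 0"
proof (cases "j \<le> k")
  case True
  then have "a j \<le> a k" "x k \<le> x j"
    using assms by (auto dest: mono_onD monotone_onD)
  then show ?thesis by (simp add: mult_nonpos_nonneg)
next
  case False
  then have "a k \<le> a j" "x j \<le> x k"
    using assms by (auto dest: mono_onD monotone_onD)
  then show ?thesis by (simp add: mult_nonneg_nonpos)
qed

lemma antimono_on_inverse_square:
  fixes g :: "'i::order \<Rightarrow> 'a::linordered_field"
  assumes "mono_on S g" "\<And>j. j \<in> S \<Longrightarrow> g j > 0"
  shows "antimono_on S (\<lambda>j. 1 / (g j)\<^sup>2)"
proof (rule monotone_onI)
  fix j k assume "j \<in> S" "k \<in> S" "j \<le> k"
  then have "0 < g j" "g j \<le> g k"
    using assms by (auto dest: mono_onD)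
  then have "(g j)\<^sup>2 \<le> (g k)\<^sup>2" "0 < (g j)\<^sup>2"
    using power_mono[of "g j" "g k" 2] by simp_all
  then show "1 / (g k)\<^sup>2 \<le> 1 / (g j)\<^sup>2"
    by (simp add: frac_le)
qed

lemma E_STAC_eq_weighted_sum:
  "E_STAC K h \<pi> = (\<Sum>j\<in>{1..K}. (2 ^ (j - 1))\<^sup>2 * (1 / (h (\<pi> j))\<^sup>2))"
  unfolding E_STAC_def by (simp add: power_divide)

lemma E_SEP_eq_product_of_sums:
  assumes "\<pi> permutes {1..K}"
  shows "E_SEP K h = (\<Sum>j\<in>{1..K}. (2 ^ (j - 1))\<^sup>2) * (\<Sum>j\<in>{1..K}. 1 / (h (\<pi> j))\<^sup>2) / real K"
proof -
  have "(\<Sum>i=1..K. \<Sum>j=1..K. (2 ^ (j - 1) / h i)\<^sup>2)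
      = (\<Sum>j\<in>{1..K}. (2 ^ (j - 1))\<^sup>2) * (\<Sum>i\<in>{1..K}. 1 / (h i)\<^sup>2)"
    by (simp add: power_divide sum_divide_distrib sum_distrib_left)
  also have "(\<Sum>i\<in>{1..K}. 1 / (h i)\<^sup>2) = (\<Sum>j\<in>{1..K}. 1 / (h (\<pi> j))\<^sup>2)"
    using sum.permute[OF assms, of "\<lambda>i. 1 / (h i)\<^sup>2"] by (simp add: comp_def)
  finally show ?thesis unfolding E_SEP_def by simp
qed

theorem theorem4:
  fixes K :: nat and h :: "nat \<Rightarrow> real" and \<pi> :: "nat \<Rightarrow> nat"
  assumes "K \<ge> 1"
    and "\<And>i. i \<in> {1..K} \<Longrightarrow> h i > 0"
    and "\<pi> permutes {1..K}"
    and "\<And>j1 j2. j1 \<in> {1..K} \<Longrightarrow> j2 \<in> {1..K} \<Longrightarrow> j1 \<le> j2 \<Longrightarrow> h (\<pi> j1) \<le> h (\<pi> j2)"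
  shows "E_SEP K h \<ge> E_STAC K h \<pi>
    \<and> (E_SEP K h = E_STAC K h \<pi> \<longrightarrow> (\<forall>i\<in>{1..K}. \<forall>i'\<in>{1..K}. h i = h i'))"
proof -
  define a where "a j = ((2::real) ^ (j - 1))\<^sup>2" for j :: nat
  define x where "x j = 1 / (h (\<pi> j))\<^sup>2" for j
  have \<pi>_image: "\<pi> ` {1..K} = {1..K}"
    using permutes_image[OF assms(3)] .
  then have h\<pi>_pos: "j \<in> {1..K} \<Longrightarrow> h (\<pi> j) > 0" for j
    using assms(2) by blast
  have a_strict_mono: "strict_mono_on {1..K} a"
    by (rule strict_mono_onI) (auto simp: a_def intro!: power_strict_mono)
  have "mono_on {1..K} (h \<circ> \<pi>)"
    by (rule monotone_onI) (simp add: assms(4))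
  then have "antimono_on {1..K} x"
    unfolding x_def using antimono_on_inverse_square[of "{1..K}" "h \<circ> \<pi>"] h\<pi>_pos by simp
  then have opposite: "j \<in> {1..K} \<Longrightarrow> k \<in> {1..K} \<Longrightarrow> (a j - a k) * (x j - x k) \<le> 0" for j k
    using mono_antimono_product_nonpos strict_mono_on_imp_mono_on[OF a_strict_mono] by blast
  have E: "E_STAC K h \<pi> = (\<Sum>j\<in>{1..K}. a j * x j)"
    "E_SEP K h = (\<Sum>j\<in>{1..K}. a j) * (\<Sum>j\<in>{1..K}. x j) / real K"
    unfolding a_def x_def E_STAC_eq_weighted_sum E_SEP_eq_product_of_sums[OF assms(3)] by simp_all
  have "real K > 0" using assms(1) by simp
  then have "E_SEP K h \<ge> E_STAC K h \<pi>"
    using chebyshev_sum_le_oppositely_ordered[of "{1..K}" a x] opposite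
    by (simp add: E field_simps)
  moreover have "\<forall>i\<in>{1..K}. \<forall>i'\<in>{1..K}. h i = h i'" if "E_SEP K h = E_STAC K h \<pi>"
  proof -
    have cheb_eq: "real (card {1..K}) * (\<Sum>j\<in>{1..K}. a j * x j) = (\<Sum>j\<in>{1..K}. a j) * (\<Sum>j\<in>{1..K}. x j)"
      using that \<open>real K > 0\<close> unfolding E by (simp add: divide_eq_eq mult.commute)
    have x_const: "x j = x k" if "j \<in> {1..K}" "k \<in> {1..K}" for j k
      using chebyshev_sum_eq_imp_constant[OF finite_atLeastAtMost opposite
          strict_mono_on_imp_inj_on[OF a_strict_mono] cheb_eq that] .
    have "h (\<pi> j) = h (\<pi> k)" if "j \<in> {1..K}" "k \<in> {1..K}" for j k
    proof -
      have "(h (\<pi> j))\<^sup>2 = (h (\<pi> k))\<^sup>2"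
        using x_const[OF that] unfolding x_def by simp
      then show ?thesis
        using h\<pi>_pos[OF that(1)] h\<pi>_pos[OF that(2)] by (simp add: power2_eq_iff_nonneg)
    qed
    then show ?thesis
      by (metis \<pi>_image imageE)
  qed
  ultimately show ?thesis by blast
qed

end
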